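(* (Deterministic error bounds, exact sparsity.) Let $\hat\Gamma\in\mathbb R^{q\times q}$ be symmetric positive semidefinite, $\hat\gamma\in\mathbb R^q$, and $\beta^*\in\mathbb R^q$. Let $J=\mathrm{supp}(\beta^* )$ with $|J|=k$ and $J^C\ne\emptyset$. Let $w_j\ge0$ be weights with $\min_{j\in J^C}w_j=1$, and set $r_w=\max_{j\in J}w_j$ (with value $0$ if $J=\emptyset$). Let $\lambda>0$, and let $\hat\beta$ be any minimizer of $-2\beta'\hat\gamma+\beta'\hat\Gamma\beta+\lambda\sum_j w_j|\beta_j|$. Suppose the following hold: - $\|\hat\gamma-\hat\Gamma\beta^*\|_\infty\le\lambda/4$; - there exist $\alpha>0$ and $\tau\ge0$ with $\theta'\hat\Gamma\theta\ge\alpha\|\theta\|_2^2-\tau\|\theta\|_1^2$ for all $\theta\in\mathbb R^q$; - $4(1+r_w)^2k\tau\le\alpha/2$. Then $$\|\hat\beta-\beta^*\|_2\le\frac{1+2r_w}{\alpha}\sqrt k\,\lambda,\qquad \|\hat\beta-\beta^*\|_1\le\frac{2+6r_w+4r_w^2}{\alpha}k\lambda,$$ $$(\hat\beta-\beta^* )'\hat\Gamma(\hat\beta-\beta^* )\le\frac{(1+2r_w)^2}{2\alpha}k\lambda^2 .$$ If $J\ne\emptyset$ and $s_0=\min_{j\in J}|\beta^*_j|$, then $$|\mathrm{supp}(\beta^* )\setminus\mathrm{supp}(\hat\beta)|\le\frac{2+6r_w+4r_w^2}{s_0\alpha}k\lambda .$$ Finally, for $\tilde\beta_j=\hat\beta_j\mathbf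 1(|\hat\beta_j|>\lambda)$, $$|\mathrm{supp}(\tilde\beta)\setminus\mathrm{supp}(\beta^* )|\le(1+2r_w)^2k/\alpha .$$
   Context: $\|\cdot\|_1,\|\cdot\|_2,\|\cdot\|_\infty$ are the usual vector norms and $\mathrm{supp}(v)=\{j:v_j\neq0\}$. *)

theory Defs
  imports "HOL-Analysis.Analysis"
begin

definition supp :: "real ^ 'n \<Rightarrow> 'n set" where
  "supp v = {j. v $ j \<noteq> 0}"

definition norm1 :: "real ^ 'n::finite \<Rightarrow> real" where
  "norm1 v = (\<Sum>j\<in>UNIV. \<bar>v $ j\<bar>)"

definition norminf :: "real ^ 'n::finite \<Rightarrow> real" where
  "norminf v = Max ((\<lambda>j. \<bar>v $ j\<bar>) ` UNIV)"

definition quadform :: "real ^ 'n::finite ^ 'n \<Rightarrow> real ^ 'n \<Rightarrow> real" where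
  "quadform G x = x \<bullet> (G *v x)"

definition lasso_obj :: "real ^ 'n::finite ^ 'n \<Rightarrow> real ^ 'n \<Rightarrow> ('n \<Rightarrow> real) \<Rightarrow> real \<Rightarrow> real ^ 'n \<Rightarrow> real" where
  "lasso_obj G g w lam b = - 2 * (b \<bullet> g) + quadform G b + lam * (\<Sum>j\<in>UNIV. w j * \<bar>b $ j\<bar>)"

end

theory Submission
  imports Defs
begin

text \<open>Comparing the objective at the minimiser and at the target, and bounding the noise term
  by \<open>\<lambda>/4 \<parallel>\<Delta>\<parallel>\<^sub>1\<close>, the error \<open>\<Delta>\<close> satisfies \<open>\<Delta>'\<Gamma>\<Delta> \<le> \<lambda>(1/2 + r) \<parallel>\<Delta>\<^sub>J\<parallel>\<^sub>1 - \<lambda>/2 \<parallel>\<Delta>\<^sub>J\<^sub>C\<parallel>\<^sub>1\<close>.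
  Positive semidefiniteness then puts \<open>\<Delta>\<close> in the cone \<open>\<parallel>\<Delta>\<^sub>J\<^sub>C\<parallel>\<^sub>1 \<le> (1 + 2r) \<parallel>\<Delta>\<^sub>J\<parallel>\<^sub>1\<close>, on which
  \<open>\<parallel>\<Delta>\<parallel>\<^sub>1 \<le> 2(1 + r) \<surd>k \<parallel>\<Delta>\<parallel>\<^sub>2\<close>, so the restricted eigenvalue condition gives
  \<open>\<alpha>/2 \<parallel>\<Delta>\<parallel>\<^sub>2\<^sup>2 \<le> \<Delta>'\<Gamma>\<Delta> \<le> \<lambda>(1/2 + r) \<surd>k \<parallel>\<Delta>\<parallel>\<^sub>2\<close>. All bounds follow; the support bounds because
  each coordinate counted contributes at least \<open>s\<^sub>0\<close> to \<open>\<parallel>\<Delta>\<parallel>\<^sub>1\<close>, resp. at least \<open>\<lambda>\<close> to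
  \<open>\<parallel>\<Delta>\<^sub>J\<^sub>C\<parallel>\<^sub>1\<close>.\<close>

lemma inner_mult_vec_symmetric:
  fixes G :: "real ^ 'n::finite ^ 'n"
  assumes "transpose G = G"
  shows "x \<bullet> (G *v y) = y \<bullet> (G *v x)"
proof -
  have "x \<bullet> (G *v y) = (transpose G *v x) \<bullet> y"
    by (simp add: dot_lmul_matrix)
  then show ?thesis
    using assms by (simp add: inner_commute)
qed

lemma quadform_add:
  fixes G :: "real ^ 'n::finite ^ 'n"
  assumes "transpose G = G"
  shows "quadform G (a + d) = quadform G a + quadform G d + 2 * (d \<bullet> (G *v a))"
  using inner_mult_vec_symmetric[OF assms, of a d]
  by (simp add: quadform_def matrix_vector_right_distrib inner_add_left inner_add_right)

lemma abs_inner_le_norm1_norminf: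
  fixes d h :: "real ^ 'n::finite"
  shows "\<bar>d \<bullet> h\<bar> \<le> norm1 d * norminf h"
proof -
  have "\<bar>d \<bullet> h\<bar> \<le> (\<Sum>j\<in>UNIV. \<bar>d$j\<bar> * \<bar>h$j\<bar>)"
    unfolding inner_vec_def by (rule order_trans[OF sum_abs]) (simp add: abs_mult)
  also have "\<dots> \<le> (\<Sum>j\<in>UNIV. \<bar>d$j\<bar> * norminf h)"
    by (rule sum_mono, rule mult_left_mono) (auto simp: norminf_def)
  finally show ?thesis
    by (simp add: norm1_def sum_distrib_right)
qed

lemma sum_UNIV_split:
  fixes f :: "'a::finite \<Rightarrow> 'b::comm_monoid_add"
  shows "sum f UNIV = sum f J + sum f (-J)"
  using sum.union_disjoint[of J "-J" f] by (simp add: Compl_partition)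

lemma norm1_split:
  fixes d :: "real ^ 'n::finite"
  shows "norm1 d = (\<Sum>j\<in>J. \<bar>d$j\<bar>) + (\<Sum>j\<in>-J. \<bar>d$j\<bar>)"
  unfolding norm1_def by (rule sum_UNIV_split)

lemma sum_abs_le_sqrt_card_norm:
  fixes d :: "real ^ 'n::finite"
  shows "(\<Sum>j\<in>J. \<bar>d$j\<bar>) \<le> sqrt (card J) * norm d"
proof -
  have "(\<Sum>j\<in>J. \<bar>d$j\<bar>) = (\<Sum>j\<in>J. \<bar>d$j\<bar> * \<bar>1\<bar>)"
    by simp
  also have "\<dots> \<le> L2_set (\<lambda>j. d$j) J * L2_set (\<lambda>j. 1) J"
    by (rule L2_set_mult_ineq)
  also have "L2_set (\<lambda>j. 1) J = sqrt (card J)"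
    by (simp add: L2_set_constant)
  also have "L2_set (\<lambda>j. d$j) J \<le> L2_set (\<lambda>j. d$j) UNIV"
    unfolding L2_set_def by (rule real_sqrt_le_mono, rule sum_mono2) auto
  also have "L2_set (\<lambda>j. d$j) UNIV = norm d"
    by (simp add: norm_vec_def L2_set_def)
  finally show ?thesis
    by (simp add: mult.commute mult_right_mono)
qed

lemma card_mult_le_sum_abs:
  fixes d :: "real ^ 'n::finite"
  assumes "\<forall>j\<in>S. t \<le> \<bar>d$j\<bar>"
  shows "real (card S) * t \<le> (\<Sum>j\<in>S. \<bar>d$j\<bar>)"
  using sum_mono[of S "\<lambda>_. t" "\<lambda>j. \<bar>d$j\<bar>"] assms by simp

lemma le_of_quadratic_le_linear:
  fixes x c alpha :: real
  assumes "alpha > 0" "c \<ge> 0" "x \<ge> 0" "alpha / 2 * x\<^sup>2 \<le> c * x"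
  shows "x \<le> 2 * c / alpha"
proof (cases "x = 0")
  case False
  with assms have "alpha / 2 * x \<le> c"
    by (simp add: power2_eq_square mult_le_cancel_right)
  with assms(1) show ?thesis
    by (simp add: pos_le_divide_eq mult.commute)
qed (use assms in \<open>auto simp: power2_eq_square\<close>)

lemma lasso_basic_inequality:
  fixes G :: "real ^ 'n::finite ^ 'n"
  assumes "transpose G = G"
    and "lasso_obj G g w lam bhat \<le> lasso_obj G g w lam bstar"
  shows "quadform G (bhat - bstar) \<le> 2 * ((bhat - bstar) \<bullet> (g - G *v bstar))
           + lam * ((\<Sum>j\<in>UNIV. w j * \<bar>bstar$j\<bar>) - (\<Sum>j\<in>UNIV. w j * \<bar>bhat$j\<bar>))"
proof -
  have "lasso_obj G g w lam (bstar + (bhat - bstar)) \<le> lasso_obj G g w lam bstar"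
    using assms(2) by simp
  then show ?thesis
    unfolding lasso_obj_def quadform_add[OF assms(1)]
    by (simp add: inner_add_left inner_diff_right algebra_simps)
qed

lemma weighted_l1_diff_le:
  fixes b bstar :: "real ^ 'n::finite"
  assumes w_nonneg: "\<forall>j. w j \<ge> 0"
    and w_on: "\<forall>j\<in>J. w j \<le> r"
    and w_off: "\<forall>j\<in>-J. w j \<ge> 1"
    and supp_sub: "supp bstar \<subseteq> J"
  shows "(\<Sum>j\<in>UNIV. w j * \<bar>bstar$j\<bar>) - (\<Sum>j\<in>UNIV. w j * \<bar>b$j\<bar>)
           \<le> r * (\<Sum>j\<in>J. \<bar>(b - bstar)$j\<bar>) - (\<Sum>j\<in>-J. \<bar>(b - bstar)$j\<bar>)"
proof -
  let ?f = "\<lambda>j. w j * (\<bar>bstar$j\<bar> - \<bar>b$j\<bar>)"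
  have on: "sum ?f J \<le> (\<Sum>j\<in>J. r * \<bar>(b - bstar)$j\<bar>)"
  proof (rule sum_mono)
    fix j assume "j \<in> J"
    have "?f j \<le> w j * \<bar>(b - bstar)$j\<bar>"
      using w_nonneg by (intro mult_left_mono) auto
    also have "\<dots> \<le> r * \<bar>(b - bstar)$j\<bar>"
      using w_on \<open>j \<in> J\<close> by (simp add: mult_right_mono)
    finally show "?f j \<le> r * \<bar>(b - bstar)$j\<bar>" .
  qed
  have off: "sum ?f (-J) \<le> (\<Sum>j\<in>-J. - \<bar>(b - bstar)$j\<bar>)"
  proof (rule sum_mono)
    fix j assume "j \<in> -J"
    then have "bstar$j = 0"
      using supp_sub by (auto simp: supp_def)
    moreover have "1 * \<bar>b$j\<bar> \<le> w j * \<bar>b$j\<bar>"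
      using w_off \<open>j \<in> -J\<close> by (intro mult_right_mono) auto
    ultimately show "?f j \<le> - \<bar>(b - bstar)$j\<bar>"
      by simp
  qed
  have "(\<Sum>j\<in>UNIV. w j * \<bar>bstar$j\<bar>) - (\<Sum>j\<in>UNIV. w j * \<bar>b$j\<bar>) = sum ?f UNIV"
    by (simp add: sum_subtractf right_diff_distrib)
  also have "\<dots> \<le> r * (\<Sum>j\<in>J. \<bar>(b - bstar)$j\<bar>) - (\<Sum>j\<in>-J. \<bar>(b - bstar)$j\<bar>)"
    using sum_UNIV_split[of ?f J] on off by (simp add: sum_distrib_left sum_negf)
  finally show ?thesis .
qed

lemma restricted_eigenvalue_on_cone:
  fixes G :: "real ^ 'n::finite ^ 'n"
  assumes RE: "\<forall>\<theta>. quadform G \<theta> \<ge> alpha * (norm \<theta>)\<^sup>2 - tau * (norm1 \<theta>)\<^sup>2"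
    and tau_nonneg: "tau \<ge> 0"
    and cone: "norm1 \<theta> \<le> c * norm \<theta>"
    and small: "c\<^sup>2 * tau \<le> alpha / 2"
  shows "alpha / 2 * (norm \<theta>)\<^sup>2 \<le> quadform G \<theta>"
proof -
  have "(norm1 \<theta>)\<^sup>2 \<le> (c * norm \<theta>)\<^sup>2"
    using cone by (intro power_mono) (auto simp: norm1_def sum_nonneg)
  then have "tau * (norm1 \<theta>)\<^sup>2 \<le> tau * (c\<^sup>2 * (norm \<theta>)\<^sup>2)"
    using tau_nonneg by (intro mult_left_mono) (simp_all add: power_mult_distrib)
  also have "\<dots> = (c\<^sup>2 * tau) * (norm \<theta>)\<^sup>2"
    by simp
  also have "\<dots> \<le> alpha / 2 * (norm \<theta>)\<^sup>2"
    using mult_right_mono[OF small, of "(norm \<theta>)\<^sup>2"] by simp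
  finally show ?thesis
    using RE[rule_format, of \<theta>] by linarith
qed

lemma norm1_le_of_cone:
  fixes d :: "real ^ 'n::finite"
  assumes "(\<Sum>j\<in>-J. \<bar>d$j\<bar>) \<le> c * (\<Sum>j\<in>J. \<bar>d$j\<bar>)" "c \<ge> 0"
  shows "norm1 d \<le> (1 + c) * sqrt (card J) * norm d"
proof -
  have "norm1 d \<le> (1 + c) * (\<Sum>j\<in>J. \<bar>d$j\<bar>)"
    using assms(1) norm1_split[of d J] by (simp add: algebra_simps)
  also have "\<dots> \<le> (1 + c) * (sqrt (card J) * norm d)"
    using mult_left_mono[OF sum_abs_le_sqrt_card_norm[of d J], of "1 + c"] assms(2) by simp
  finally show ?thesis
    by (simp add: mult.assoc)
qed

locale lasso_deterministic =
  fixes G :: "real ^ 'n::finite ^ 'n" and g bstar bhat :: "real ^ 'n"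
    and w :: "'n \<Rightarrow> real" and lam r :: real and J :: "'n set"
  assumes sym: "transpose G = G"
    and psd: "\<forall>x. quadform G x \<ge> 0"
    and minimizer: "lasso_obj G g w lam bhat \<le> lasso_obj G g w lam bstar"
    and noise: "norminf (g - G *v bstar) \<le> lam / 4"
    and lam_pos: "lam > 0"
    and w_nonneg: "\<forall>j. w j \<ge> 0"
    and w_on: "\<forall>j\<in>J. w j \<le> r"
    and w_off: "\<forall>j\<in>-J. w j \<ge> 1"
    and supp_sub: "supp bstar \<subseteq> J"
    and r_nonneg: "r \<ge> 0"
begin

abbreviation err :: "real ^ 'n" where
  "err \<equiv> bhat - bstar"

lemma cone_inequality:
  "quadform G err \<le> lam * (1/2 + r) * (\<Sum>j\<in>J. \<bar>err$j\<bar>) - lam / 2 * (\<Sum>j\<in>-J. \<bar>err$j\<bar>)"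
proof -
  have "err \<bullet> (g - G *v bstar) \<le> norm1 err * (lam / 4)"
    using abs_inner_le_norm1_norminf[of err "g - G *v bstar"]
      mult_left_mono[OF noise, of "norm1 err"]
    by (auto simp: norm1_def sum_nonneg)
  moreover have "lam * ((\<Sum>j\<in>UNIV. w j * \<bar>bstar$j\<bar>) - (\<Sum>j\<in>UNIV. w j * \<bar>bhat$j\<bar>))
      \<le> lam * (r * (\<Sum>j\<in>J. \<bar>err$j\<bar>) - (\<Sum>j\<in>-J. \<bar>err$j\<bar>))"
    using weighted_l1_diff_le[OF w_nonneg w_on w_off supp_sub, of bhat] lam_pos
    by (intro mult_left_mono) auto
  ultimately show ?thesis
    using lasso_basic_inequality[OF sym minimizer] norm1_split[of err J]
    by (simp add: algebra_simps)
qed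

lemma cone_condition: "(\<Sum>j\<in>-J. \<bar>err$j\<bar>) \<le> (1 + 2 * r) * (\<Sum>j\<in>J. \<bar>err$j\<bar>)"
proof -
  have "0 \<le> lam * ((1/2 + r) * (\<Sum>j\<in>J. \<bar>err$j\<bar>) - (\<Sum>j\<in>-J. \<bar>err$j\<bar>) / 2)"
    using cone_inequality psd[rule_format, of err] by (simp add: algebra_simps)
  then have "0 \<le> (1/2 + r) * (\<Sum>j\<in>J. \<bar>err$j\<bar>) - (\<Sum>j\<in>-J. \<bar>err$j\<bar>) / 2"
    using lam_pos by (simp add: zero_le_mult_iff)
  then show ?thesis
    by (simp add: algebra_simps)
qed

lemma norm1_err_le: "norm1 err \<le> 2 * (1 + r) * sqrt (card J) * norm err"
  using norm1_le_of_cone[OF cone_condition] r_nonneg by simp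

lemma quadform_err_le: "quadform G err \<le> lam * (1/2 + r) * sqrt (card J) * norm err"
proof -
  have "lam / 2 * (\<Sum>j\<in>-J. \<bar>err$j\<bar>) \<ge> 0"
    using lam_pos by (simp add: sum_nonneg)
  then have "quadform G err \<le> lam * (1/2 + r) * (\<Sum>j\<in>J. \<bar>err$j\<bar>)"
    using cone_inequality by linarith
  also have "\<dots> \<le> lam * (1/2 + r) * (sqrt (card J) * norm err)"
    using mult_left_mono[OF sum_abs_le_sqrt_card_norm[of err J], of "lam * (1/2 + r)"] lam_pos r_nonneg
    by simp
  finally show ?thesis
    by (simp add: mult.assoc)
qed

context
  fixes alpha tau :: real
  assumes alpha_pos: "alpha > 0" and tau_nonneg: "tau \<ge> 0"
    and RE: "\<forall>\<theta>. quadform G \<theta> \<ge> alpha * (norm \<theta>)\<^sup>2 - tau * (norm1 \<theta>)\<^sup>2"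
    and small: "4 * (1 + r)\<^sup>2 * real (card J) * tau \<le> alpha / 2"
begin

lemma l2_error_bound: "norm err \<le> (1 + 2 * r) / alpha * sqrt (card J) * lam"
proof -
  have "(2 * (1 + r) * sqrt (card J))\<^sup>2 = 4 * (1 + r)\<^sup>2 * real (card J)"
    unfolding power_mult_distrib by simp
  then have "(2 * (1 + r) * sqrt (card J))\<^sup>2 * tau \<le> alpha / 2"
    using small by simp
  then have "alpha / 2 * (norm err)\<^sup>2 \<le> quadform G err"
    by (rule restricted_eigenvalue_on_cone[OF RE tau_nonneg norm1_err_le])
  also have "\<dots> \<le> (lam * (1/2 + r) * sqrt (card J)) * norm err"
    by (rule quadform_err_le)
  finally have quadratic: "alpha / 2 * (norm err)\<^sup>2 \<le> (lam * (1/2 + r) * sqrt (card J)) * norm err" .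
  have "lam * (1/2 + r) * sqrt (card J) \<ge> 0"
    using lam_pos r_nonneg by simp
  then have "norm err \<le> 2 * (lam * (1/2 + r) * sqrt (card J)) / alpha"
    by (rule le_of_quadratic_le_linear[OF alpha_pos _ norm_ge_zero quadratic])
  then show ?thesis
    by (simp add: algebra_simps)
qed

lemma sqrt_card_mult_norm_err_le: "sqrt (card J) * norm err \<le> (1 + 2 * r) / alpha * card J * lam"
proof -
  have "sqrt (card J) * norm err \<le> sqrt (card J) * ((1 + 2 * r) / alpha * sqrt (card J) * lam)"
    using l2_error_bound by (rule mult_left_mono) simp
  also have "\<dots> = (1 + 2 * r) / alpha * (sqrt (card J) * sqrt (card J)) * lam"
    by (simp add: algebra_simps)
  finally show ?thesis
    by simp
qed

lemma l1_error_bound: "norm1 err \<le> (2 + 6 * r + 4 * r\<^sup>2) / alpha * card J * lam"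
proof -
  have "norm1 err \<le> 2 * (1 + r) * ((1 + 2 * r) / alpha * card J * lam)"
    using norm1_err_le mult_left_mono[OF sqrt_card_mult_norm_err_le, of "2 * (1 + r)"] r_nonneg
    by (simp add: algebra_simps)
  then show ?thesis
    by (simp add: power2_eq_square algebra_simps add_divide_distrib)
qed

lemma prediction_error_bound: "quadform G err \<le> (1 + 2 * r)\<^sup>2 / (2 * alpha) * card J * lam\<^sup>2"
proof -
  have "quadform G err \<le> lam * (1/2 + r) * ((1 + 2 * r) / alpha * card J * lam)"
    using quadform_err_le mult_left_mono[OF sqrt_card_mult_norm_err_le, of "lam * (1/2 + r)"]
      lam_pos r_nonneg
    by (simp add: algebra_simps)
  then show ?thesis
    by (simp add: power2_eq_square algebra_simps add_divide_distrib)
qed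

lemma off_support_error_bound: "(\<Sum>j\<in>-J. \<bar>err$j\<bar>) \<le> (1 + 2 * r)\<^sup>2 / alpha * card J * lam"
proof -
  have "(\<Sum>j\<in>J. \<bar>err$j\<bar>) \<le> (1 + 2 * r) / alpha * card J * lam"
    using sum_abs_le_sqrt_card_norm sqrt_card_mult_norm_err_le by (rule order_trans)
  then have "(\<Sum>j\<in>-J. \<bar>err$j\<bar>) \<le> (1 + 2 * r) * ((1 + 2 * r) / alpha * card J * lam)"
    using cone_condition mult_left_mono[of _ _ "1 + 2 * r"] r_nonneg by fastforce
  then show ?thesis
    by (simp add: power2_eq_square mult.assoc)
qed

end

end

lemma card_supp_diff_mult_le_norm1:
  fixes b bstar :: "real ^ 'n::finite"
  shows "real (card (supp bstar - supp b)) * Min ((\<lambda>j. \<bar>bstar$j\<bar>) ` supp bstar)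
           \<le> norm1 (b - bstar)"
proof -
  have "\<forall>j\<in>supp bstar - supp b. Min ((\<lambda>j. \<bar>bstar$j\<bar>) ` supp bstar) \<le> \<bar>(b - bstar)$j\<bar>"
    by (auto simp: supp_def intro: Min_le)
  then have "real (card (supp bstar - supp b)) * Min ((\<lambda>j. \<bar>bstar$j\<bar>) ` supp bstar)
      \<le> (\<Sum>j\<in>supp bstar - supp b. \<bar>(b - bstar)$j\<bar>)"
    by (rule card_mult_le_sum_abs)
  also have "\<dots> \<le> norm1 (b - bstar)"
    unfolding norm1_def by (rule sum_mono2) auto
  finally show ?thesis .
qed

lemma card_threshold_supp_diff_mult_le:
  fixes b bstar :: "real ^ 'n::finite"
  shows "real (card (supp (\<chi> j. if \<bar>b$j\<bar> > t then b$j else 0) - supp bstar)) * t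
           \<le> (\<Sum>j\<in>-supp bstar. \<bar>(b - bstar)$j\<bar>)"
proof -
  let ?T = "supp (\<chi> j. if \<bar>b$j\<bar> > t then b$j else 0) - supp bstar"
  have "\<forall>j\<in>?T. t \<le> \<bar>(b - bstar)$j\<bar>"
    by (auto simp: supp_def split: if_splits)
  then have "real (card ?T) * t \<le> (\<Sum>j\<in>?T. \<bar>(b - bstar)$j\<bar>)"
    by (rule card_mult_le_sum_abs)
  also have "\<dots> \<le> (\<Sum>j\<in>-supp bstar. \<bar>(b - bstar)$j\<bar>)"
    by (rule sum_mono2) auto
  finally show ?thesis .
qed

theorem mainTheorem2:
  fixes G :: "real ^ 'n::finite ^ 'n" and g bstar bhat :: "real ^ 'n"
    and w :: "'n \<Rightarrow> real" and lam alpha tau :: real and k :: nat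
  assumes sym: "transpose G = G"
    and psd: "\<forall>x. quadform G x \<ge> 0"
    and k_def: "k = card (supp bstar)"
    and Jc: "supp bstar \<noteq> UNIV"
    and w_nonneg: "\<forall>j. w j \<ge> 0"
    and w_min: "Min (w ` (- supp bstar)) = 1"
    and lam_pos: "lam > 0"
    and minimizer: "\<forall>b. lasso_obj G g w lam bhat \<le> lasso_obj G g w lam b"
    and noise: "norminf (g - G *v bstar) \<le> lam / 4"
    and alpha_pos: "alpha > 0" and tau_nonneg: "tau \<ge> 0"
    and RE: "\<forall>\<theta>. quadform G \<theta> \<ge> alpha * (norm \<theta>)\<^sup>2 - tau * (norm1 \<theta>)\<^sup>2"
    and cond: "4 * (1 + (if supp bstar = {} then 0 else Max (w ` supp bstar)))\<^sup>2 * real k * tau \<le> alpha / 2"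
  shows "let r = (if supp bstar = {} then 0 else Max (w ` supp bstar)) in
     norm (bhat - bstar) \<le> (1 + 2 * r) / alpha * sqrt (real k) * lam
   \<and> norm1 (bhat - bstar) \<le> (2 + 6 * r + 4 * r\<^sup>2) / alpha * real k * lam
   \<and> quadform G (bhat - bstar) \<le> (1 + 2 * r)\<^sup>2 / (2 * alpha) * real k * lam\<^sup>2
   \<and> (supp bstar \<noteq> {} \<longrightarrow>
        real (card (supp bstar - supp bhat))
          \<le> (2 + 6 * r + 4 * r\<^sup>2) / (Min ((\<lambda>j. \<bar>bstar $ j\<bar>) ` supp bstar) * alpha) * real k * lam)
   \<and> real (card (supp (\<chi> j. if \<bar>bhat $ j\<bar> > lam then bhat $ j else 0) - supp bstar))
        \<le> (1 + 2 * r)\<^sup>2 * real k / alpha"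
proof -
  define J where "J = supp bstar"
  define r where "r = (if J = {} then 0 else Max (w ` J))"
  have "\<forall>j\<in>J. w j \<le> r" "\<forall>j\<in>-J. w j \<ge> 1" "supp bstar \<subseteq> J"
    using w_min unfolding r_def J_def by (auto simp flip: w_min intro: Min_le)
  moreover have "r \<ge> 0"
    using w_nonneg unfolding r_def by (auto intro: order_trans[OF _ Max_ge])
  ultimately interpret lasso_deterministic G g bstar bhat w lam r J
    using sym psd minimizer noise lam_pos w_nonneg by unfold_locales auto
  have small: "4 * (1 + r)\<^sup>2 * real (card J) * tau \<le> alpha / 2"
    using cond unfolding r_def J_def k_def .
  note bounds = l2_error_bound l1_error_bound prediction_error_bound off_support_error_bound
  note bounds = bounds[OF alpha_pos tau_nonneg RE small, unfolded J_def k_def[symmetric]]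
  have lost: "real (card (supp bstar - supp bhat))
      \<le> (2 + 6 * r + 4 * r\<^sup>2) / (Min ((\<lambda>j. \<bar>bstar $ j\<bar>) ` supp bstar) * alpha) * real k * lam"
    if "supp bstar \<noteq> {}"
  proof -
    have "Min ((\<lambda>j. \<bar>bstar $ j\<bar>) ` supp bstar) > 0"
      using that by (subst Min_gr_iff) (auto simp: supp_def)
    then show ?thesis
      using order_trans[OF card_supp_diff_mult_le_norm1 bounds(2)] alpha_pos
      by (simp add: pos_le_divide_eq field_simps)
  qed
  have "real (card (supp (\<chi> j. if \<bar>bhat $ j\<bar> > lam then bhat $ j else 0) - supp bstar)) * lam
      \<le> (1 + 2 * r)\<^sup>2 * real k / alpha * lam"
    using order_trans[OF card_threshold_supp_diff_mult_le bounds(4)] by simp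
  then have spurious: "real (card (supp (\<chi> j. if \<bar>bhat $ j\<bar> > lam then bhat $ j else 0) - supp bstar))
      \<le> (1 + 2 * r)\<^sup>2 * real k / alpha"
    using lam_pos by (rule mult_right_le_imp_le)
  show ?thesis
    using bounds lost spurious unfolding r_def J_def Let_def by simp
qed

end
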